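(* For $n\ge 0$ let $h_n$ denote the number of matching coalescent histories of the lodgepole species tree $\lambda_n$ (for $n\ge 1$), with the convention $h_0=1$. Then for all $n\ge 1$, $$h_n=(2n+1)!!-\sum_{k=0}^{n-1}(2k+1)!!\,h_{n-1-k}.$$ Moreover, for all $n\ge 1$, $$(2n+1)!!\left(\frac{n-2}{n}\right)\le h_n\le (2n+1)!!,$$ and asymptotically, as $n\to\infty$, $$h_n\sim(2n+1)!!\sim\sqrt{2}\left[\frac{2(n+1)}{e}\right]^{n+1}.$$
   Context: A species tree is a rooted binary tree whose leaves carry distinct labels. Each node $v$ of a tree $t$ has a branch directly above it: for a non-root node this is the edge joining $v$ to its parent, and the root additionally has a root branch above it. A leaf $x$ descends from a branch if $x$ lies in the subtree below that branch (i.e. below the node at the lower end of the branch, including that node). A branch $b'$ is descended from a branch $b$ if the node at the lower end of $b'$ lies in the subtree below $b$. Given a species tree $t$, a matching coalescent history of $t$ is a map $h$ from the set of internal nodes of $t$ to the set of branches of $t$ such that: (a) for every leaf $x$ and every internal node $k$, if $x$ descends from $k$ in $t$ then $x$ descends from the branch $h(k)$; (b) for all internal nodes $k_1,k_2$, if $k_2$ is a descendant of $k_1$ then the branch $h(k_2)$ is descended from or coincides with the branch $h(k_1)$. The lodgepole family $(\lambda_n)_{n\ge0}$ is defined by: $\lambda_0$ is the tree with one leaf, and for $n\ge 0$, $\lambda_{n+1}$ is obtained by attaching $\lambda_n$ and a cherry (a tree with exactly two leaves) as the two child subtrees of a new common root. Thus $\lambda_n$ has $2n+1$ leaves (labeled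 arbitrarily). Here $(2n+1)!!=(2n+1)(2n-1)\cdots 3\cdot 1$, and $a_n\sim b_n$ means $a_n/b_n\to1$. *)

theory Defs
  imports Complex_Main "HOL-Library.Landau_Symbols" "HOL-Library.FuncSet" "HOL-Library.Sublist"
begin

text \<open>Tree shapes (rooted binary trees); a node is identified by its position,
the path from the root (False = left child, True = right child).
The branch above node v is identified with v (the root branch with the root).\<close>

datatype tree = Leaf | Node tree tree

fun nodes :: "tree \<Rightarrow> bool list set" where
  "nodes Leaf = {[]}"
| "nodes (Node l r) = insert [] ((\<lambda>p. False # p) ` nodes l \<union> (\<lambda>p. True # p) ` nodes r)"

fun internal_nodes :: "tree \<Rightarrow> bool list set" where
  "internal_nodes Leaf = {}"
| "internal_nodes (Node l r) =
     insert [] ((\<lambda>p. False # p) ` internal_nodes l \<union> (\<lambda>p. True # p) ` internal_nodes r)"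

definition leaves :: "tree \<Rightarrow> bool list set" where
  "leaves t = nodes t - internal_nodes t"

text \<open>Node (or branch) p lies in the subtree below node (branch) q iff q is a prefix of p.\<close>

definition is_mch :: "tree \<Rightarrow> (bool list \<Rightarrow> bool list) \<Rightarrow> bool" where
  "is_mch t h \<longleftrightarrow>
     (\<forall>x\<in>leaves t. \<forall>k\<in>internal_nodes t. prefix k x \<longrightarrow> prefix (h k) x) \<and>
     (\<forall>k1\<in>internal_nodes t. \<forall>k2\<in>internal_nodes t. prefix k1 k2 \<longrightarrow> prefix (h k1) (h k2))"

definition matching_histories :: "tree \<Rightarrow> (bool list \<Rightarrow> bool list) set" where
  "matching_histories t = {h \<in> internal_nodes t \<rightarrow>\<^sub>E nodes t. is_mch t h}"

definition cherry :: tree where "cherry = Node Leaf Leaf"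

fun lodgepole :: "nat \<Rightarrow> tree" where
  "lodgepole 0 = Leaf"
| "lodgepole (Suc n) = Node (lodgepole n) cherry"

definition hcount :: "nat \<Rightarrow> nat" where
  "hcount n = (if n = 0 then 1 else card (matching_histories (lodgepole n)))"

fun dfact :: "nat \<Rightarrow> nat" where
  "dfact 0 = 1"
| "dfact (Suc 0) = 1"
| "dfact (Suc (Suc n)) = Suc (Suc n) * dfact n"

end

theory Submission
  imports Defs "HOL-Analysis.Summation_Tests" "HOL-Real_Asymp.Real_Asymp"
begin

text \<open>A matching history sends each internal node to a branch on its path to the root, monotonically.
  Grafting \<open>\<lambda>\<^sub>n\<close> below a path of length \<open>m\<close> and splitting off the root and the cherry node
  yields the transfer recursion \<open>H (n+1) m = \<Sum>\<^sub>j\<^sub>\<le>\<^sub>m (j+2) H n (j+1)\<close> with \<open>h\<^sub>n = H n 0\<close>.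
  Adding the source term \<open>E n 0\<close> to this recursion gives a sequence with closed form
  \<open>E n m = C(2n+m+1, 2n) (2n-1)!!\<close>, so \<open>E n 0 = (2n+1)!!\<close>, and by linearity
  \<open>E n 0 = H n 0 + \<Sum>\<^sub>j\<^sub><\<^sub>n H j 0 E (n-1-j) 0\<close>: this is the recursion for \<open>h\<^sub>n\<close>.
  It gives \<open>h\<^sub>n \<le> (2n+1)!!\<close> at once, and the lower bound follows from
  \<open>\<Sum>\<^sub>k\<^sub>\<le>\<^sub>n (2k+1)!! (2(n-k)+1)!! \<le> 4 (2n+1)!!\<close>. Finally
  \<open>(2m-1)!! = (2m)! / (2\<^sup>m m!)\<close>, and the ratio to \<open>\<surd>2 (2m/e)\<^sup>m\<close> is
  \<open>exp (\<sigma>(2m) - \<sigma>(m))\<close> for the Stirling error \<open>\<sigma>\<close>, which converges.\<close>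

section \<open>Matching histories as prefix-monotone maps\<close>

lemma finite_internal_nodes: "finite (internal_nodes t)"
  by (induction t) auto

lemma internal_nodes_subset_nodes: "internal_nodes t \<subseteq> nodes t"
  by (induction t) auto

lemma internal_node_child_in_nodes: "k \<in> internal_nodes t \<Longrightarrow> k @ [b] \<in> nodes t"
proof (induction t arbitrary: k)
  case (Node l r)
  have "[] \<in> nodes l" "[] \<in> nodes r" by (cases l; simp) (cases r; simp)
  with Node show ?case by (cases b) auto
qed simp

lemma nodes_prefix_closed: "x \<in> nodes t \<Longrightarrow> prefix y x \<Longrightarrow> y \<in> nodes t"
proof (induction t arbitrary: x y)
  case (Node l r)
  then show ?case by (cases y; cases x) auto
qed simp

lemma leaves_Node: "leaves (Node l r) = (#) False ` leaves l \<union> (#) True ` leaves r"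
  by (auto simp: leaves_def)

lemma exists_leaf_below: "x \<in> nodes t \<Longrightarrow> \<exists>y\<in>leaves t. prefix x y"
proof (induction t arbitrary: x)
  case Leaf
  then show ?case by (simp add: leaves_def)
next
  case (Node l r)
  have "[] \<in> nodes l" by (cases l) auto
  then obtain y where "y \<in> leaves l" using Node.IH(1) by blast
  then have "False # y \<in> leaves (Node l r)" by (simp add: leaves_Node)
  moreover have "\<exists>z\<in>leaves (Node l r). prefix (b # x') z" if "b # x' \<in> nodes (Node l r)" for b x'
  proof -
    have "x' \<in> nodes (if b then r else l)" using that by (cases b) auto
    then obtain z where "z \<in> leaves (if b then r else l)" "prefix x' z"
      using Node.IH by (cases b) auto
    then show ?thesis by (intro bexI[of _ "b # z"]) (auto simp: leaves_Node split: if_splits)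
  qed
  ultimately show ?case using Node.prems by (cases x) auto
qed

text \<open>The leaves below the two children of an internal node have no common ancestor strictly
  below it.\<close>

lemma leaves_below_prefix_iff:
  assumes k: "k \<in> internal_nodes t"
  shows "(\<forall>x\<in>leaves t. prefix k x \<longrightarrow> prefix q x) \<longleftrightarrow> prefix q k"
proof
  assume below: "\<forall>x\<in>leaves t. prefix k x \<longrightarrow> prefix q x"
  have child: "prefix q (k @ [b]) \<or> prefix (k @ [b]) q" for b
  proof -
    obtain y where "y \<in> leaves t" "prefix (k @ [b]) y"
      using exists_leaf_below internal_node_child_in_nodes[OF k] by blast
    with below have "prefix q y" "prefix (k @ [b]) y" by (auto dest: prefix_order.trans[rotated])
    then show ?thesis using prefix_same_cases by blast
  qed
  show "prefix q k"
  proof (rule ccontr)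
    assume "\<not> prefix q k"
    then have "prefix (k @ [False]) q" "prefix (k @ [True]) q"
      using child[of False] child[of True] by (auto simp: prefix_snoc)
    then show False using prefix_same_cases by fastforce
  qed
qed (meson prefix_order.trans)

lemma matching_histories_eq:
  "matching_histories t = {h \<in> internal_nodes t \<rightarrow>\<^sub>E UNIV. (\<forall>k\<in>internal_nodes t. prefix (h k) k) \<and>
      (\<forall>k1\<in>internal_nodes t. \<forall>k2\<in>internal_nodes t. prefix k1 k2 \<longrightarrow> prefix (h k1) (h k2))}"
proof -
  have leaf_cond: "(\<forall>x\<in>leaves t. \<forall>k\<in>internal_nodes t. prefix k x \<longrightarrow> prefix (h k) x)
      \<longleftrightarrow> (\<forall>k\<in>internal_nodes t. prefix (h k) k)" for h
    using leaves_below_prefix_iff by blast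
  have "h \<in> internal_nodes t \<rightarrow>\<^sub>E nodes t \<longleftrightarrow> h \<in> internal_nodes t \<rightarrow>\<^sub>E UNIV"
    if "\<forall>k\<in>internal_nodes t. prefix (h k) k" for h
    using that internal_nodes_subset_nodes nodes_prefix_closed by (fastforce simp: PiE_def Pi_def)
  then show ?thesis
    unfolding matching_histories_def is_mch_def leaf_cond by blast
qed

section \<open>Lodgepole histories grafted below a path\<close>

lemma prefix_drop_mono: "prefix a b \<Longrightarrow> prefix (drop i a) (drop i b)"
  by (elim prefixE) (simp add: drop_append)

text \<open>Histories of \<open>\<lambda>\<^sub>n\<close> grafted below the end of a path \<open>p\<close>: an internal node may also be
  sent to the branches above it along \<open>p\<close>.\<close>

definition hanging_histories :: "nat \<Rightarrow> bool list \<Rightarrow> (bool list \<Rightarrow> bool list) set" where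
  "hanging_histories n p = {h \<in> internal_nodes (lodgepole n) \<rightarrow>\<^sub>E UNIV.
     (\<forall>k\<in>internal_nodes (lodgepole n). prefix (h k) (p @ k)) \<and>
     (\<forall>k1\<in>internal_nodes (lodgepole n). \<forall>k2\<in>internal_nodes (lodgepole n).
        prefix k1 k2 \<longrightarrow> prefix (h k1) (h k2))}"

lemma matching_histories_lodgepole: "matching_histories (lodgepole n) = hanging_histories n []"
  unfolding matching_histories_eq hanging_histories_def by simp

lemma internal_nodes_cherry [simp]: "internal_nodes cherry = {[]}"
  by (simp add: cherry_def)

lemma finite_hanging_histories: "finite (hanging_histories n p)"
proof (rule finite_subset)
  let ?I = "internal_nodes (lodgepole n)"
  show "hanging_histories n p \<subseteq> ?I \<rightarrow>\<^sub>E (\<Union>k\<in>?I. {q. prefix q (p @ k)})"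
    unfolding hanging_histories_def by auto
  show "finite (?I \<rightarrow>\<^sub>E (\<Union>k\<in>?I. {q. prefix q (p @ k)}))"
    by (intro finite_PiE finite_UN_I finite_internal_nodes) (simp add: set_prefixes_eq[symmetric])
qed

text \<open>Where the cherry node \<open>[True]\<close> of \<open>\<lambda>\<^sub>n\<^sub>+\<^sub>1\<close> may go once the root is sent to \<open>take i p\<close>.\<close>

definition cherry_branches :: "bool list \<Rightarrow> nat \<Rightarrow> bool list set" where
  "cherry_branches p i = {c. prefix (take i p) c \<and> prefix c (p @ [True])}"

lemma cherry_branches_eq:
  "cherry_branches p i = (@) (take i p) ` {s. prefix s (drop i p @ [True])}"
proof -
  have "prefix (take i p @ s) (p @ [True]) \<longleftrightarrow> prefix s (drop i p @ [True])" for s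
    by (metis append_take_drop_id append.assoc same_prefix_prefix)
  then show ?thesis
    unfolding cherry_branches_def by (auto simp: prefix_def[of "take i p"])
qed

lemma finite_cherry_branches: "finite (cherry_branches p i)"
  unfolding cherry_branches_eq by (simp add: set_prefixes_eq[symmetric])

lemma card_cherry_branches: "card (cherry_branches p i) = length p - i + 2"
proof -
  have "card (cherry_branches p i) = card {s. prefix s (drop i p @ [True])}"
    unfolding cherry_branches_eq by (rule card_image) (simp add: inj_on_def)
  also have "\<dots> = Suc (length (drop i p @ [True]))"
    by (metis card_set_prefixes set_prefixes_eq)
  finally show ?thesis by simp
qed

text \<open>A history of \<open>\<lambda>\<^sub>n\<^sub>+\<^sub>1\<close> below \<open>p\<close> is determined by the branch \<open>take i p\<close> of its root, the branch
  of the cherry node, and a history of the left subtree \<open>\<lambda>\<^sub>n\<close> below the remaining path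
  \<open>drop i p @ [False]\<close>, read relative to \<open>take i p\<close>.\<close>

definition history_data :: "nat \<Rightarrow> bool list \<Rightarrow> (nat \<times> bool list \<times> (bool list \<Rightarrow> bool list)) set" where
  "history_data n p =
     (SIGMA i:{..length p}. cherry_branches p i \<times> hanging_histories n (drop i p @ [False]))"

definition assemble_history ::
    "nat \<Rightarrow> bool list \<Rightarrow> nat \<times> bool list \<times> (bool list \<Rightarrow> bool list) \<Rightarrow> bool list \<Rightarrow> bool list" where
  "assemble_history n p = (\<lambda>(i, c, g). \<lambda>k\<in>internal_nodes (lodgepole (Suc n)).
     if k = [] then take i p else if k = [True] then c else take i p @ g (tl k))"

definition split_history ::
    "nat \<Rightarrow> (bool list \<Rightarrow> bool list) \<Rightarrow> nat \<times> bool list \<times> (bool list \<Rightarrow> bool list)" where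
  "split_history n h = (length (h []), h [True],
     \<lambda>k\<in>internal_nodes (lodgepole n). drop (length (h [])) (h (False # k)))"

lemma assemble_history_in:
  assumes "d \<in> history_data n p"
  shows "assemble_history n p d \<in> hanging_histories (Suc n) p"
proof -
  let ?I = "internal_nodes (lodgepole n)"
  obtain i c g where d: "d = (i, c, g)" and c: "c \<in> cherry_branches p i"
    and g: "g \<in> hanging_histories n (drop i p @ [False])"
    using assms unfolding history_data_def by auto
  have g_below: "\<forall>k\<in>?I. prefix (g k) (drop i p @ False # k)"
    and g_mono: "\<forall>k1\<in>?I. \<forall>k2\<in>?I. prefix k1 k2 \<longrightarrow> prefix (g k1) (g k2)"
    using g unfolding hanging_histories_def by auto
  define h where "h = assemble_history n p d"
  have h_Left: "h (False # k) = take i p @ g k" if "k \<in> ?I" for k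
    using that unfolding h_def d assemble_history_def by simp
  have h_root: "h [] = take i p" and h_cherry: "h [True] = c"
    unfolding h_def d assemble_history_def by simp_all
  have c_bounds: "prefix (take i p) c" "prefix c (p @ [True])"
    using c unfolding cherry_branches_def by auto
  have "prefix (h (False # k)) (p @ False # k)" if "k \<in> ?I" for k
  proof -
    have "prefix (take i p @ g k) (take i p @ (drop i p @ False # k))" using g_below that by simp
    then show ?thesis using h_Left[OF that] by (metis append_take_drop_id append.assoc)
  qed
  then have below: "\<forall>k\<in>internal_nodes (lodgepole (Suc n)). prefix (h k) (p @ k)"
    using c_bounds by (auto simp: h_root h_cherry take_is_prefix)
  moreover have "\<forall>k1\<in>internal_nodes (lodgepole (Suc n)). \<forall>k2\<in>internal_nodes (lodgepole (Suc n)).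
      prefix k1 k2 \<longrightarrow> prefix (h k1) (h k2)"
    using g_mono c_bounds by (auto simp: h_root h_cherry h_Left prefix_Cons)
  moreover have "h \<in> internal_nodes (lodgepole (Suc n)) \<rightarrow>\<^sub>E UNIV"
    unfolding h_def d assemble_history_def by simp
  ultimately show ?thesis
    unfolding hanging_histories_def h_def by blast
qed

lemma split_history_in:
  assumes "h \<in> hanging_histories (Suc n) p"
  shows "split_history n h \<in> history_data n p"
proof -
  let ?I = "internal_nodes (lodgepole n)"
  have below: "\<And>k. k \<in> internal_nodes (lodgepole (Suc n)) \<Longrightarrow> prefix (h k) (p @ k)"
    and mono: "\<And>k1 k2. k1 \<in> internal_nodes (lodgepole (Suc n)) \<Longrightarrow>
       k2 \<in> internal_nodes (lodgepole (Suc n)) \<Longrightarrow> prefix k1 k2 \<Longrightarrow> prefix (h k1) (h k2)"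
    using assms unfolding hanging_histories_def by blast+
  define i where "i = length (h [])"
  obtain zs where "p = h [] @ zs"
    using below[of "[]"] by (auto elim!: prefixE)
  then have root: "h [] = take i p" and i: "i \<le> length p"
    unfolding i_def by simp_all
  have "h [True] \<in> cherry_branches p i"
    using below[of "[True]"] mono[of "[]" "[True]"] root
    by (simp add: cherry_branches_def)
  moreover have "(\<lambda>k\<in>?I. drop i (h (False # k))) \<in> hanging_histories n (drop i p @ [False])"
  proof -
    have "prefix (drop i (h (False # k))) (drop i p @ False # k)" if "k \<in> ?I" for k
      using prefix_drop_mono[OF below[of "False # k"], of i] that i by simp
    moreover have "prefix (drop i (h (False # k1))) (drop i (h (False # k2)))"
      if "k1 \<in> ?I" "k2 \<in> ?I" "prefix k1 k2" for k1 k2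
      using prefix_drop_mono[OF mono[of "False # k1" "False # k2"]] that by simp
    ultimately show ?thesis using i unfolding hanging_histories_def by auto
  qed
  ultimately show ?thesis
    unfolding split_history_def history_data_def i_def[symmetric] using i by simp
qed

lemma split_assemble_history:
  assumes "d \<in> history_data n p"
  shows "split_history n (assemble_history n p d) = d"
proof -
  obtain i c g where d: "d = (i, c, g)" and i: "i \<le> length p"
    and g: "g \<in> hanging_histories n (drop i p @ [False])"
    using assms unfolding history_data_def by auto
  have "g \<in> extensional (internal_nodes (lodgepole n))"
    using g unfolding hanging_histories_def by (auto simp: PiE_def)
  then have "(\<lambda>k\<in>internal_nodes (lodgepole n). drop i (assemble_history n p d (False # k))) = g"
    using i by (intro ext) (auto simp: d assemble_history_def extensional_def)
  then show ?thesis
    using i by (simp add: split_history_def assemble_history_def d min_absorb2)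
qed

lemma assemble_split_history:
  assumes "h \<in> hanging_histories (Suc n) p"
  shows "assemble_history n p (split_history n h) = h"
proof
  fix k
  let ?J = "internal_nodes (lodgepole (Suc n))"
  have ext: "h \<in> extensional ?J" and below: "\<forall>k\<in>?J. prefix (h k) (p @ k)"
    and mono: "\<forall>k1\<in>?J. \<forall>k2\<in>?J. prefix k1 k2 \<longrightarrow> prefix (h k1) (h k2)"
    using assms unfolding hanging_histories_def PiE_def by blast+
  have root_in: "[] \<in> ?J" by simp
  have "prefix (h []) p" using below root_in by fastforce
  then have root: "take (length (h [])) p = h []" by (auto elim!: prefixE)
  show "assemble_history n p (split_history n h) k = h k"
  proof (cases "k \<in> ?J")
    case True
    then have "prefix (h []) (h k)" using mono[rule_format, OF root_in True] by simp
    then have "h [] @ drop (length (h [])) (h k) = h k" by (auto elim!: prefixE)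
    with True root show ?thesis by (auto simp: assemble_history_def split_history_def)
  next
    case False
    then have "h k = undefined" using ext by (rule extensional_arb[rotated])
    with False show ?thesis by (simp add: assemble_history_def split_history_def)
  qed
qed

lemma bij_betw_assemble_history:
  "bij_betw (assemble_history n p) (history_data n p) (hanging_histories (Suc n) p)"
  by (rule bij_betw_byWitness[where f' = "split_history n"])
    (auto simp: split_assemble_history assemble_split_history assemble_history_in split_history_in)

fun hanging_count :: "nat \<Rightarrow> nat \<Rightarrow> nat" where
  "hanging_count 0 m = 1"
| "hanging_count (Suc n) m = (\<Sum>j\<le>m. (j + 2) * hanging_count n (j + 1))"

lemma card_hanging_histories: "card (hanging_histories n p) = hanging_count n (length p)"
proof (induction n arbitrary: p)
  case 0
  have "hanging_histories 0 p = {\<lambda>_. undefined}"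
    unfolding hanging_histories_def by (simp add: PiE_empty_domain)
  then show ?case by simp
next
  case (Suc n)
  have "card (hanging_histories (Suc n) p) = card (history_data n p)"
    using bij_betw_same_card[OF bij_betw_assemble_history] by simp
  also have "\<dots> = (\<Sum>i\<le>length p. (length p - i + 2) * hanging_count n (length p - i + 1))"
    unfolding history_data_def
    by (subst card_SigmaI) (auto simp: card_cartesian_product card_cherry_branches Suc.IH
        finite_hanging_histories finite_cherry_branches intro!: sum.cong)
  also have "\<dots> = hanging_count (Suc n) (length p)"
    using sum.atLeastAtMost_rev[of "\<lambda>j. (j + 2) * hanging_count n (j + 1)" 0 "length p"]
    by (simp add: atMost_atLeast0)
  finally show ?case .
qed

lemma hcount_eq_hanging_count: "hcount n = hanging_count n 0"
  using card_hanging_histories[of n "[]"]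
  by (simp add: hcount_def matching_histories_lodgepole)

section \<open>The recursion and the bounds\<close>

lemma dfact_pos: "dfact n > 0"
  by (induction n rule: dfact.induct) simp_all

lemma dfact_odd: "dfact (2 * n + 1) = (2 * n + 1) * dfact (2 * n - 1)"
  by (cases n) (simp_all add: algebra_simps)

abbreviation odd_dfact :: "nat \<Rightarrow> nat" where
  "odd_dfact n \<equiv> dfact (2 * n + 1)"

lemma odd_dfact_Suc: "odd_dfact (Suc n) = (2 * n + 3) * odd_dfact n"
  by (simp add: algebra_simps)

fun augmented_count :: "nat \<Rightarrow> nat \<Rightarrow> nat" where
  "augmented_count 0 m = 1"
| "augmented_count (Suc n) m = augmented_count n 0 + (\<Sum>j\<le>m. (j + 2) * augmented_count n (j + 1))"

lemma augmented_count_eq: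
  "augmented_count n m = hanging_count n m + (\<Sum>j<n. hanging_count j m * augmented_count (n - 1 - j) 0)"
proof (induction n arbitrary: m)
  case (Suc n)
  have "augmented_count (Suc n) m = augmented_count n 0 + hanging_count (Suc n) m
      + (\<Sum>i<n. (\<Sum>j\<le>m. (j + 2) * hanging_count i (j + 1)) * augmented_count (n - 1 - i) 0)"
    by (simp add: Suc algebra_simps sum.distrib sum_distrib_left sum_distrib_right
        sum.swap[of _ "{..<n}"])
  also have "\<dots> = hanging_count (Suc n) m
      + (hanging_count 0 m * augmented_count n 0
         + (\<Sum>i<n. hanging_count (Suc i) m * augmented_count (n - 1 - i) 0))"
    by simp
  also have "\<dots> = hanging_count (Suc n) m
      + (\<Sum>j<Suc n. hanging_count j m * augmented_count (Suc n - 1 - j) 0)"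
    by (simp only: sum.lessThan_Suc_shift) simp
  finally show ?case .
qed simp

lemma sum_times_binomial:
  "N + 1 + (\<Sum>j<m. (j + 2) * (N + j + 2 choose N)) = (N + 1) * (N + m + 2 choose (N + 2))"
proof (induction m)
  case (Suc m)
  have "(m + 2) * (N + m + 2 choose N) = (N + 1) * (N + m + 2 choose (N + 1))"
    using Suc_times_binomial_add[of N "m + 1"] by (simp add: algebra_simps)
  then show ?case
    using Suc by (simp add: algebra_simps)
qed simp

lemma augmented_count_closed_form:
  "augmented_count n m = (2 * n + m + 1 choose 2 * n) * dfact (2 * n - 1)"
proof (induction n arbitrary: m)
  case (Suc n)
  let ?D = "dfact (2 * n - 1)"
  have "augmented_count (Suc n) m
      = (2 * n + 1) * ?D + (\<Sum>j\<le>m. (j + 2) * (2 * n + j + 2 choose 2 * n) * ?D)"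
    by (simp add: Suc algebra_simps)
  also have "\<dots> = (2 * n + 1 + (\<Sum>j<Suc m. (j + 2) * (2 * n + j + 2 choose 2 * n))) * ?D"
    by (simp only: lessThan_Suc_atMost sum_distrib_right distrib_right)
  also have "\<dots> = (2 * n + 1) * (2 * n + Suc m + 2 choose (2 * n + 2)) * ?D"
    by (simp only: sum_times_binomial)
  also have "\<dots> = (2 * Suc n + m + 1 choose 2 * Suc n) * dfact (2 * Suc n - 1)"
    using dfact_odd[of n] by (simp add: algebra_simps del: binomial_Suc_Suc)
  finally show ?case .
qed simp

lemma augmented_count_0: "augmented_count n 0 = dfact (2 * n + 1)"
  using dfact_odd[of n] by (simp add: augmented_count_closed_form)

lemma hcount_recursion: "hcount n + (\<Sum>k<n. odd_dfact k * hcount (n - 1 - k)) = odd_dfact n"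
proof -
  have "odd_dfact n = hcount n + (\<Sum>j<n. hcount j * odd_dfact (n - 1 - j))"
    using augmented_count_eq[of n 0] by (simp add: augmented_count_0 hcount_eq_hanging_count)
  also have "(\<Sum>j<n. hcount j * odd_dfact (n - 1 - j)) = (\<Sum>k<n. odd_dfact k * hcount (n - 1 - k))"
    by (subst sum.nat_diff_reindex[symmetric]) (auto intro!: sum.cong)
  finally show ?thesis by simp
qed

lemma hcount_le_odd_dfact: "hcount n \<le> odd_dfact n"
  using hcount_recursion[of n] by linarith

lemma odd_dfact_convolution_Suc:
  "(\<Sum>k<Suc (Suc n). odd_dfact k * odd_dfact (Suc n - k))
     = odd_dfact (Suc n) + (n + 3) * (\<Sum>k<Suc n. odd_dfact k * odd_dfact (n - k))"
proof -
  let ?S = "\<Sum>k<Suc n. odd_dfact k * odd_dfact (n - k)"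
  define T where "T = (\<Sum>k<Suc n. odd_dfact k * odd_dfact (Suc n - k))"
  have T_right: "T = (\<Sum>k<Suc n. (2 * (n - k) + 3) * (odd_dfact k * odd_dfact (n - k)))"
    unfolding T_def
  proof (intro sum.cong refl)
    fix k assume "k \<in> {..<Suc n}"
    then have "Suc n - k = Suc (n - k)" by simp
    then show "odd_dfact k * odd_dfact (Suc n - k) = (2 * (n - k) + 3) * (odd_dfact k * odd_dfact (n - k))"
      by (simp only: odd_dfact_Suc mult_ac)
  qed
  also have "\<dots> = (\<Sum>k<Suc n. (2 * k + 3) * (odd_dfact k * odd_dfact (n - k)))"
    by (subst sum.nat_diff_reindex[symmetric]) (auto simp: mult.commute intro!: sum.cong)
  finally have T_left: "T = \<dots>" .
  text \<open>Averaging the two expressions for \<open>T\<close> makes the weights constant.\<close>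
  have "2 * T = (\<Sum>k<Suc n. (2 * (n - k) + 3) * (odd_dfact k * odd_dfact (n - k)))
      + (\<Sum>k<Suc n. (2 * k + 3) * (odd_dfact k * odd_dfact (n - k)))"
    using T_right T_left by linarith
  also have "\<dots> = (\<Sum>k<Suc n. (2 * n + 6) * (odd_dfact k * odd_dfact (n - k)))"
    unfolding sum.distrib[symmetric]
  proof (intro sum.cong refl)
    fix k assume "k \<in> {..<Suc n}"
    then have "2 * (n - k) + 3 + (2 * k + 3) = 2 * n + 6" by simp
    then show "(2 * (n - k) + 3) * (odd_dfact k * odd_dfact (n - k))
        + (2 * k + 3) * (odd_dfact k * odd_dfact (n - k))
        = (2 * n + 6) * (odd_dfact k * odd_dfact (n - k))"
      by (simp only: add_mult_distrib[symmetric])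
  qed
  also have "\<dots> = 2 * ((n + 3) * ?S)"
    by (simp only: sum_distrib_left[symmetric]) (simp add: algebra_simps)
  finally have "T = (n + 3) * ?S"
    by simp
  moreover have "(\<Sum>k<Suc (Suc n). odd_dfact k * odd_dfact (Suc n - k)) = T + odd_dfact (Suc n)"
    unfolding T_def by (simp only: sum.lessThan_Suc) simp
  ultimately show ?thesis by simp
qed

lemma odd_dfact_convolution_le: "(\<Sum>k<Suc n. odd_dfact k * odd_dfact (n - k)) \<le> 4 * odd_dfact n"
proof (induction n rule: nat_less_induct)
  case (1 n)
  consider "n < 3" | m where "n = Suc m" "m \<ge> 2"
    using not_less by (cases n) auto
  then show ?case
  proof cases
    case 1
    then consider "n = 0" | "n = 1" | "n = 2" by linarith
    then show ?thesis by cases (simp_all add: numeral_eq_Suc lessThan_Suc)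
  next
    case 2
    then have "(\<Sum>k<Suc n. odd_dfact k * odd_dfact (n - k)) \<le> odd_dfact n + (m + 3) * (4 * odd_dfact m)"
      using "1.IH" odd_dfact_convolution_Suc[of m] by simp
    also have "\<dots> \<le> 4 * odd_dfact n"
      using 2 by (simp only: odd_dfact_Suc) (simp add: algebra_simps)
    finally show ?thesis .
  qed
qed

lemma hcount_lower_bound:
  assumes "n \<ge> 1"
  shows "real (odd_dfact n) * ((real n - 2) / real n) \<le> real (hcount n)"
proof -
  obtain m where n: "n = Suc m" using assms by (cases n) auto
  have "(\<Sum>k<n. odd_dfact k * hcount (n - 1 - k)) \<le> (\<Sum>k<Suc m. odd_dfact k * odd_dfact (m - k))"
    unfolding n by (intro sum_mono mult_left_mono) (simp_all add: hcount_le_odd_dfact[simplified])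
  also have "\<dots> \<le> 4 * odd_dfact m"
    by (rule odd_dfact_convolution_le)
  finally have "real (odd_dfact n) - 4 * real (odd_dfact m) \<le> real (hcount n)"
    using hcount_recursion[of n] by linarith
  moreover have "real (odd_dfact n) * ((real n - 2) / real n) \<le> real (odd_dfact n) - 4 * real (odd_dfact m)"
  proof -
    have "(2 * real m + 3) * (real m - 1) \<le> (2 * real m - 1) * (real m + 1)"
      by (simp add: algebra_simps)
    then have "(2 * real m + 3) * ((real m - 1) / (real m + 1)) \<le> 2 * real m - 1"
      by (simp add: field_simps)
    then have "(2 * real m + 3) * ((real m - 1) / (real m + 1)) * real (odd_dfact m)
        \<le> (2 * real m - 1) * real (odd_dfact m)"
      by (rule mult_right_mono) simp
    then show ?thesis
      unfolding n odd_dfact_Suc by (simp add: algebra_simps)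
  qed
  ultimately show ?thesis by linarith
qed

lemma hcount_asymp_equiv_odd_dfact: "(\<lambda>n. real (hcount n)) \<sim>[at_top] (\<lambda>n. real (odd_dfact n))"
proof (rule asymp_equivI')
  have lower: "(\<lambda>n. (real n - 2) / real n) \<longlonglongrightarrow> 1"
    by real_asymp
  show "((\<lambda>n. real (hcount n) / real (odd_dfact n)) \<longlongrightarrow> 1) at_top"
  proof (rule tendsto_sandwich[OF _ _ lower tendsto_const])
    show "eventually (\<lambda>n. (real n - 2) / real n \<le> real (hcount n) / real (odd_dfact n)) at_top"
      using eventually_ge_at_top[of 1]
      by eventually_elim (use hcount_lower_bound dfact_pos in \<open>simp add: field_simps\<close>)
    show "eventually (\<lambda>n. real (hcount n) / real (odd_dfact n) \<le> 1) at_top"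
      using hcount_le_odd_dfact dfact_pos by (simp add: field_simps)
  qed
qed

section \<open>Asymptotics of the double factorial\<close>

definition stirling_error :: "nat \<Rightarrow> real" where
  "stirling_error m = ln (fact m) - (real m + 1 / 2) * ln (real m) + real m"

lemma stirling_error_diff:
  "stirling_error m - stirling_error (Suc m) = (real m + 1 / 2) * ln (1 + 1 / real m) - 1"
proof (cases "m = 0")
  case False
  then have "1 + 1 / real m = (real m + 1) / real m"
    by (simp add: field_simps)
  with False have ln_step: "ln (1 + 1 / real m) = ln (real m + 1) - ln (real m)"
    by (simp add: ln_div)
  have ln_fact: "ln (fact (Suc m) :: real) = ln (real m + 1) + ln (fact m)"
    by (simp add: ln_mult add.commute)
  show ?thesis
    unfolding stirling_error_def ln_step ln_fact by (simp add: algebra_simps)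
qed (simp add: stirling_error_def)

text \<open>The differences of the Stirling error are \<open>O(1/m\<^sup>2)\<close>, so it converges.\<close>

lemma convergent_stirling_error: "convergent stirling_error"
proof -
  have "(\<lambda>m. stirling_error m - stirling_error (Suc m)) \<in> O(\<lambda>m. inverse (real m ^ 2))"
    unfolding stirling_error_diff by real_asymp
  moreover have "summable (\<lambda>m. norm (inverse (real m ^ 2)))"
    using inverse_power_summable[of 2, where ?'a = real] by simp
  ultimately have "summable (\<lambda>m. stirling_error m - stirling_error (Suc m))"
    by (rule summable_comparison_test_bigo[rotated])
  then have "convergent (\<lambda>n. stirling_error 0 - (\<Sum>i<n. stirling_error i - stirling_error (Suc i)))"
    unfolding summable_iff_convergent by (intro convergent_diff convergent_const)
  then show ?thesis
    by (simp add: sum_lessThan_telescope')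
qed

lemma dfact_times_fact: "dfact (2 * m - 1) * (2 ^ m * fact m) = (fact (2 * m) :: nat)"
proof (induction m)
  case (Suc m)
  have "dfact (2 * Suc m - 1) * (2 ^ Suc m * fact (Suc m))
      = (2 * m + 1) * (2 * m + 2) * (dfact (2 * m - 1) * (2 ^ m * fact m))"
    using dfact_odd[of m] by (simp add: algebra_simps)
  also have "\<dots> = fact (2 * Suc m)"
    unfolding Suc by (simp add: algebra_simps)
  finally show ?case .
qed simp

lemma ln_dfact_ratio:
  assumes "m \<ge> 1"
  shows "ln (real (dfact (2 * m - 1))) - ln (sqrt 2 * (2 * real m / exp 1) ^ m)
    = stirling_error (2 * m) - stirling_error m"
proof -
  have "real (dfact (2 * m - 1)) = fact (2 * m) / (2 ^ m * fact m)"
    using arg_cong[OF dfact_times_fact[of m], of real] by (simp add: field_simps)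
  then have "ln (real (dfact (2 * m - 1))) = ln (fact (2 * m)) - (real m * ln 2 + ln (fact m))"
    by (simp add: ln_div ln_mult ln_realpow)
  moreover have "ln (sqrt 2 * (2 * real m / exp 1) ^ m) = ln 2 / 2 + real m * (ln 2 + ln (real m) - 1)"
    using assms by (simp add: ln_mult ln_div ln_realpow ln_sqrt)
  moreover have "ln (real (2 * m)) = ln 2 + ln (real m)"
    using assms by (simp add: ln_mult)
  ultimately show ?thesis
    unfolding stirling_error_def by (simp add: algebra_simps)
qed

lemma dfact_asymp_equiv: "(\<lambda>m. real (dfact (2 * m - 1))) \<sim>[at_top] (\<lambda>m. sqrt 2 * (2 * real m / exp 1) ^ m)"
proof (rule asymp_equivI')
  obtain L where L: "stirling_error \<longlonglongrightarrow> L"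
    using convergent_stirling_error convergent_def by blast
  have "(\<lambda>m. stirling_error (2 * m)) \<longlonglongrightarrow> L"
    using LIMSEQ_subseq_LIMSEQ[OF L, of "\<lambda>m. 2 * m"] by (simp add: strict_mono_def o_def)
  then have "(\<lambda>m. exp (stirling_error (2 * m) - stirling_error m)) \<longlonglongrightarrow> exp (L - L)"
    by (intro tendsto_intros L)
  moreover have "eventually (\<lambda>m. exp (stirling_error (2 * m) - stirling_error m)
      = real (dfact (2 * m - 1)) / (sqrt 2 * (2 * real m / exp 1) ^ m)) at_top"
    using eventually_ge_at_top[of 1]
  proof eventually_elim
    case (elim m)
    have "real (dfact (2 * m - 1)) > 0" "sqrt 2 * (2 * real m / exp 1) ^ m > 0"
      using dfact_pos elim by simp_all
    then show ?case
      by (simp add: ln_dfact_ratio[OF elim, symmetric] exp_diff)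
  qed
  ultimately show "((\<lambda>m. real (dfact (2 * m - 1)) / (sqrt 2 * (2 * real m / exp 1) ^ m)) \<longlongrightarrow> 1) at_top"
    by (simp add: tendsto_cong)
qed

theorem proposition1:
  shows "(\<forall>n\<ge>1. int (hcount n) =
            int (dfact (2*n+1)) - (\<Sum>k<n. int (dfact (2*k+1)) * int (hcount (n-1-k))))
       \<and> (\<forall>n\<ge>1. real (dfact (2*n+1)) * ((real n - 2) / real n) \<le> real (hcount n)
                 \<and> hcount n \<le> dfact (2*n+1))
       \<and> (\<lambda>n. real (hcount n)) \<sim>[at_top] (\<lambda>n. real (dfact (2*n+1)))
       \<and> (\<lambda>n. real (dfact (2*n+1))) \<sim>[at_top] (\<lambda>n. sqrt 2 * (2 * (real n + 1) / exp 1) ^ (n+1))"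
proof (intro conjI allI impI)
  fix n :: nat
  show "int (hcount n) = int (odd_dfact n) - (\<Sum>k<n. int (odd_dfact k) * int (hcount (n - 1 - k)))"
    using arg_cong[OF hcount_recursion[of n], of int] by (simp add: of_nat_sum)
  show "hcount n \<le> odd_dfact n"
    by (rule hcount_le_odd_dfact)
  assume "n \<ge> 1"
  then show "real (odd_dfact n) * ((real n - 2) / real n) \<le> real (hcount n)"
    by (rule hcount_lower_bound)
next
  show "(\<lambda>n. real (hcount n)) \<sim>[at_top] (\<lambda>n. real (odd_dfact n))"
    by (rule hcount_asymp_equiv_odd_dfact)
  show "(\<lambda>n. real (odd_dfact n)) \<sim>[at_top] (\<lambda>n. sqrt 2 * (2 * (real n + 1) / exp 1) ^ (n + 1))"
    using asymp_equiv_compose'[OF dfact_asymp_equiv filterlim_Suc] by (simp add: add.commute)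
qed

end
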